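(* Let $\kappa\ge2$, fix $\delta>0$ and let $\boldsymbol\gamma=(\gamma_1,\dots,\gamma_\kappa)$ satisfy $\frac12<\gamma_1\le\cdots\le\gamma_\kappa$. Let $\mathcal X_\kappa$ be the set of $\kappa$-admissible matrices with entries in $\{0,\pm1\}$ having exactly one nonzero entry in each column. For $D\in\mathcal X_\kappa$ with $m$ rows and $1\le i\le m$, let $I_i(D)$ be the set of indices of columns of $D$ whose nonzero entry is in row $i$, and $\Gamma_i(D)=\sum_{j\in I_i(D)}\gamma_j$. Then $$I(D,n,\boldsymbol\gamma,\delta)=\delta^{m-2\sum_{j=1}^{\kappa}\gamma_j}\prod_{i=1}^{m}\frac{1}{2\Gamma_i(D)-1}$$ for all $D\in\mathcal X_\kappa$ and all $n\ge1$.
   Context: A division $(\nu,\mu)$ of $\{1,\dots,\kappa\}$ consists of $1\le m\le\kappa-1$ and strictly increasing sequences $\nu_1<\dots<\nu_m$, $\mu_1<\dots<\mu_{\kappa-m}$ in $\{1,\dots,\kappa\}$ which are disjoint. Given a positive integer $q$, an $m\times\kappa$ integer matrix $D=(d_{ij})$ is $(\nu,\mu)$-admissible (with denominator $q$) if no column vanishes, the gcd of its entries is $1$, $d_{i\nu_j}=q\delta_{ij}$, and $d_{i\mu_j}=0$ whenever $\mu_j<\nu_i$; $D$ is $\kappa$-admissible if it is $(\nu,\mu)$-admissible for some division and some $q$. $V_n=\pi^{n/2}/\Gamma(\frac n2+1)$, $R_n(\delta)=(\delta/V_n)^{1/n}$, $\mathbf 1_{R_n(\delta)}(\mathbf x)=1$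 if $|\mathbf x|>R_n(\delta)$ and $0$ otherwise, and $$I(D,n,\boldsymbol\gamma,\delta)=V_n^{-2\sum_{j}\gamma_j}\int_{\mathbb R^n}\cdots\int_{\mathbb R^n}\prod_{j=1}^{\kappa}\Big|\sum_{i=1}^m\frac{d_{ij}}{q}\mathbf x_i\Big|^{-2\gamma_jn}\mathbf 1_{R_n(\delta)}\Big(\sum_{i=1}^m\frac{d_{ij}}{q}\mathbf x_i\Big)\,d\mathbf x_1\cdots d\mathbf x_m.$$ *)

theory Defs
  imports "HOL-Analysis.Analysis"
begin

text \<open>Matrices are functions \<open>nat \<Rightarrow> nat \<Rightarrow> int\<close>, rows indexed by \<open>{1..m}\<close>,
  columns by \<open>{1..\<kappa>}\<close> (1-based, as in the paper).\<close>

definition is_division :: "nat \<Rightarrow> nat \<Rightarrow> (nat \<Rightarrow> nat) \<Rightarrow> (nat \<Rightarrow> nat) \<Rightarrow> bool" where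
  "is_division \<kappa> m \<nu> \<mu> \<longleftrightarrow>
     1 \<le> m \<and> m \<le> \<kappa> - 1 \<and>
     \<nu> ` {1..m} \<subseteq> {1..\<kappa>} \<and> \<mu> ` {1..\<kappa>-m} \<subseteq> {1..\<kappa>} \<and>
     strict_mono_on {1..m} \<nu> \<and> strict_mono_on {1..\<kappa>-m} \<mu> \<and>
     \<nu> ` {1..m} \<inter> \<mu> ` {1..\<kappa>-m} = {}"

definition admissible ::
  "nat \<Rightarrow> nat \<Rightarrow> (nat \<Rightarrow> nat) \<Rightarrow> (nat \<Rightarrow> nat) \<Rightarrow> int \<Rightarrow> (nat \<Rightarrow> nat \<Rightarrow> int) \<Rightarrow> bool" where
  "admissible \<kappa> m \<nu> \<mu> q D \<longleftrightarrow>
     is_division \<kappa> m \<nu> \<mu> \<and> 0 < q \<and>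
     (\<forall>j\<in>{1..\<kappa>}. \<exists>i\<in>{1..m}. D i j \<noteq> 0) \<and>
     Gcd {D i j | i j. i \<in> {1..m} \<and> j \<in> {1..\<kappa>}} = 1 \<and>
     (\<forall>i\<in>{1..m}. \<forall>j\<in>{1..m}. D i (\<nu> j) = (if i = j then q else 0)) \<and>
     (\<forall>i\<in>{1..m}. \<forall>j\<in>{1..\<kappa>-m}. \<mu> j < \<nu> i \<longrightarrow> D i (\<mu> j) = 0)"

definition ball_vol :: "nat \<Rightarrow> real" where
  "ball_vol n = pi powr (real n / 2) / Gamma (real n / 2 + 1)"

definition radius :: "nat \<Rightarrow> real \<Rightarrow> real" where
  "radius n \<delta> = (\<delta> / ball_vol n) powr (1 / real n)"

definition outside_ind :: "real \<Rightarrow> 'a::real_normed_vector \<Rightarrow> real" where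
  "outside_ind R x = (if norm x > R then 1 else 0)"

text \<open>The integral \<open>I(D,n,\<gamma>,\<delta>)\<close> with \<open>n = CARD('n)\<close>, as a Lebesgue integral of a
  nonnegative function over \<open>(\<real>^n)^m\<close> (value in \<open>ennreal\<close>).\<close>
definition I_int ::
  "'n::finite itself \<Rightarrow> nat \<Rightarrow> nat \<Rightarrow> int \<Rightarrow> (nat \<Rightarrow> nat \<Rightarrow> int) \<Rightarrow> (nat \<Rightarrow> real) \<Rightarrow> real \<Rightarrow> ennreal" where
  "I_int TYPE('n) \<kappa> m q D \<gamma> \<delta> =
     ennreal (ball_vol CARD('n) powr (- 2 * (\<Sum>j\<in>{1..\<kappa>}. \<gamma> j))) *
     (\<integral>\<^sup>+ x. (\<Prod>j\<in>{1..\<kappa>}.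
        ennreal (norm (\<Sum>i\<in>{1..m}. (of_int (D i j) / of_int q) *\<^sub>R x i) powr (- 2 * \<gamma> j * real CARD('n))
                 * outside_ind (radius CARD('n) \<delta>) (\<Sum>i\<in>{1..m}. (of_int (D i j) / of_int q) *\<^sub>R x i)))
      \<partial>(PiM {1..m} (\<lambda>_. lborel :: (real^'n) measure)))"

end

theory Submission
  imports Defs
begin

text \<open>Every column of D has a single nonzero entry, +1 or -1, so the pivot entries force q = 1
  and column j only sees the variable x_i of its row, up to sign. The integrand therefore
  factors over the rows into |x_i|^(-2 Gamma_i n) 1(|x_i| > R), and the integral is a product of
  radial integrals: for a > n, the integral of |y|^(-a) over |y| > R equals V_n n R^(n-a) / (a-n).
  These are computed by writing |y|^(-a) as the integral of a r^(-a-1) over r >= |y| and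
  exchanging the order of integration, which reduces them to volumes of spherical shells.
  As V_n R^n = delta, row i contributes V_n^(2 Gamma_i) delta^(1 - 2 Gamma_i) / (2 Gamma_i - 1),
  and the powers of V_n cancel against the prefactor.\<close>

lemma powr_outside_ind_eq_nn_integral_tail:
  fixes y :: "'a::real_normed_vector"
  assumes "0 < R" "1 < a"
  shows "ennreal (norm y powr (-a) * outside_ind R y) =
    (\<integral>\<^sup>+ r. ennreal (a * r powr (-a-1)) * indicator {p. R < norm (fst p) \<and> norm (fst p) \<le> snd p} (y, r) \<partial>lborel)"
proof (cases "norm y > R")
  case True
  then have "0 < norm y" using assms by linarith
  then have "((\<lambda>r. a * r powr (-a-1)) has_integral a * (-(norm y powr (-a-1+1)) / (-a-1+1))) {norm y..}"
    using assms by (intro has_integral_mult_right has_integral_powr_to_inf) auto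
  moreover have "a * (-(norm y powr (-a-1+1)) / (-a-1+1)) = norm y powr (-a)" using assms by simp
  ultimately have "(\<integral>\<^sup>+ r. ennreal (a * r powr (-a-1)) * indicator {norm y..} r \<partial>lborel) = ennreal (norm y powr (-a))"
    using assms by (intro nn_integral_has_integral_lebesgue') auto
  moreover have "indicator {p. R < norm (fst p) \<and> norm (fst p) \<le> snd p} (y, r) = (indicator {norm y..} r :: ennreal)" for r
    using True by (auto simp: indicator_def)
  ultimately show ?thesis using True by (simp add: outside_ind_def)
qed (simp add: indicator_def outside_ind_def)

lemma emeasure_spherical_shell:
  assumes "0 < R"
  shows "emeasure lborel {y::'a::euclidean_space. R < norm y \<and> norm y \<le> r} =
     ennreal (if R \<le> r then unit_ball_vol DIM('a) * (r ^ DIM('a) - R ^ DIM('a)) else 0)"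
proof (cases "R \<le> r")
  case True
  have "{y::'a. R < norm y \<and> norm y \<le> r} = cball 0 r - cball 0 R" by auto
  moreover have "emeasure lborel (cball (0::'a) r - cball 0 R) = emeasure lborel (cball (0::'a) r) - emeasure lborel (cball (0::'a) R)"
    using True emeasure_lborel_cball_finite[of "0::'a" R] by (intro emeasure_Diff) auto
  moreover have "ennreal (unit_ball_vol DIM('a) * r ^ DIM('a)) - ennreal (unit_ball_vol DIM('a) * R ^ DIM('a))
      = ennreal (unit_ball_vol DIM('a) * r ^ DIM('a) - unit_ball_vol DIM('a) * R ^ DIM('a))"
    using assms by (intro ennreal_minus) auto
  ultimately show ?thesis using True assms by (simp add: emeasure_cball algebra_simps)
next
  case False
  then have "{y::'a. R < norm y \<and> norm y \<le> r} = {}" by auto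
  with False show ?thesis by (simp only: emeasure_empty) simp
qed

lemma nn_integral_shell_profile:
  fixes R a V :: real
  assumes "0 < R" "real k < a" "0 \<le> V"
  shows "(\<integral>\<^sup>+ r. ennreal (a * r powr (-a-1) * (V * (r ^ k - R ^ k))) * indicator {R..} r \<partial>lborel)
     = ennreal (V * R powr (real k - a) * real k / (a - real k))"
proof -
  have a0: "0 < a" using assms(2) by linarith
  have powr_shift: "r ^ k * r powr (-a-1) = r powr (real k - a - 1)" if "0 < r" for r :: real
    using that by (simp add: powr_realpow[symmetric] powr_add[symmetric] algebra_simps)
  have integral: "((\<lambda>r. a * V * r powr (real k - a - 1) - a * V * R ^ k * r powr (-a-1)) has_integral
      a * V * (-(R powr (real k - a - 1 + 1)) / (real k - a - 1 + 1)) - a * V * R ^ k * (-(R powr (-a-1+1)) / (-a-1+1))) {R..}"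
    using assms a0 by (intro has_integral_diff has_integral_mult_right has_integral_powr_to_inf) auto
  have integral_value: "a * V * (-(R powr (real k - a - 1 + 1)) / (real k - a - 1 + 1)) - a * V * R ^ k * (-(R powr (-a-1+1)) / (-a-1+1))
      = V * R powr (real k - a) * real k / (a - real k)"
  proof -
    have "R ^ k * R powr (-a) = R powr (real k - a)"
      using assms(1) by (simp add: powr_realpow[symmetric] powr_add[symmetric])
    moreover have "a - real k \<noteq> 0" using assms(2) by simp
    ultimately show ?thesis using a0 by (simp add: field_simps)
  qed
  have integrand: "a * r powr (-a-1) * (V * (r ^ k - R ^ k)) = a * V * r powr (real k - a - 1) - a * V * R ^ k * r powr (-a-1)"
    if "R \<le> r" for r
    using powr_shift[of r] that assms(1) by (simp add: algebra_simps)
  have "0 \<le> a * r powr (-a-1) * (V * (r ^ k - R ^ k))" if "R \<le> r" for r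
    using that assms a0 by (intro mult_nonneg_nonneg) (auto intro: power_mono)
  moreover have "((\<lambda>r. a * r powr (-a-1) * (V * (r ^ k - R ^ k))) has_integral
      V * R powr (real k - a) * real k / (a - real k)) {R..}"
    using integral unfolding integral_value by (rule has_integral_eq[rotated]) (simp add: integrand)
  ultimately show ?thesis by (intro nn_integral_has_integral_lebesgue') auto
qed

lemma nn_integral_powr_outside_ball:
  fixes R a :: real
  assumes R: "0 < R" and a: "real DIM('a) < a"
  shows "(\<integral>\<^sup>+ y. ennreal (norm (y::'a::euclidean_space) powr (-a) * outside_ind R y) \<partial>lborel)
     = ennreal (unit_ball_vol DIM('a) * R powr (real DIM('a) - a) * real DIM('a) / (a - real DIM('a)))"
proof -
  define S where "S = {p::'a \<times> real. R < norm (fst p) \<and> norm (fst p) \<le> snd p}"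
  define w where "w r = ennreal (a * r powr (-a-1))" for r
  have a1: "1 < a" using a DIM_positive[where 'a='a] by linarith
  have "(\<lambda>(y, r). w r * indicator S (y, r)) \<in> borel_measurable (lborel \<Otimes>\<^sub>M lborel)"
    unfolding S_def w_def by measurable
  then have Fubini: "(\<integral>\<^sup>+ y. (\<integral>\<^sup>+ r. w r * indicator S (y, r) \<partial>lborel) \<partial>lborel)
      = (\<integral>\<^sup>+ r. (\<integral>\<^sup>+ y. w r * indicator S (y, r) \<partial>lborel) \<partial>lborel)"
    by (intro pair_sigma_finite.Fubini') (auto intro: pair_sigma_finite.intro lborel.sigma_finite_measure_axioms)
  have shell: "(\<integral>\<^sup>+ y. w r * indicator S (y, r) \<partial>lborel)
      = ennreal (a * r powr (-a-1) * (unit_ball_vol DIM('a) * (r ^ DIM('a) - R ^ DIM('a)))) * indicator {R..} r"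
    for r
  proof -
    have "(\<integral>\<^sup>+ y. w r * indicator S (y, r) \<partial>lborel)
        = (\<integral>\<^sup>+ y. w r * indicator {y::'a. R < norm y \<and> norm y \<le> r} y \<partial>lborel)"
      by (intro nn_integral_cong) (simp add: S_def indicator_def)
    also have "\<dots> = w r * emeasure lborel {y::'a. R < norm y \<and> norm y \<le> r}"
      by (intro nn_integral_cmult_indicator) simp
    finally show ?thesis
      using a1 by (simp add: emeasure_spherical_shell[OF R] w_def ennreal_mult'[symmetric])
  qed
  have "(\<integral>\<^sup>+ y. ennreal (norm (y::'a) powr (-a) * outside_ind R y) \<partial>lborel)
      = (\<integral>\<^sup>+ y. (\<integral>\<^sup>+ r. w r * indicator S (y, r) \<partial>lborel) \<partial>lborel)"
    unfolding S_def w_def by (intro nn_integral_cong powr_outside_ind_eq_nn_integral_tail R a1)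
  also have "\<dots> = (\<integral>\<^sup>+ r. ennreal (a * r powr (-a-1) * (unit_ball_vol DIM('a) * (r ^ DIM('a) - R ^ DIM('a)))) * indicator {R..} r \<partial>lborel)"
    unfolding Fubini shell ..
  also have "\<dots> = ennreal (unit_ball_vol DIM('a) * R powr (real DIM('a) - a) * real DIM('a) / (a - real DIM('a)))"
    using R a by (intro nn_integral_shell_profile) auto
  finally show ?thesis .
qed

lemma ball_vol_pos: "0 < ball_vol n"
  by (simp add: ball_vol_def)

lemma nn_integral_powr_outside_radius:
  fixes \<Gamma> \<delta> :: real
  assumes \<delta>: "0 < \<delta>" and \<Gamma>: "1/2 < \<Gamma>"
  shows "(\<integral>\<^sup>+ y. ennreal (norm (y::'a::euclidean_space) powr (- (2 * \<Gamma> * real DIM('a)))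
            * outside_ind (radius DIM('a) \<delta>) y) \<partial>lborel)
     = ennreal (ball_vol DIM('a) powr (2 * \<Gamma>) * \<delta> powr (1 - 2 * \<Gamma>) / (2 * \<Gamma> - 1))"
proof -
  define n where "n = real DIM('a)"
  define V where "V = ball_vol DIM('a)"
  have n: "0 < n" by (simp add: n_def)
  have V: "0 < V" by (simp add: V_def ball_vol_pos)
  then have "V \<noteq> 0" by simp
  have "unit_ball_vol DIM('a) = V"
    by (simp add: V_def ball_vol_def unit_ball_vol_def)
  moreover have "radius DIM('a) \<delta> powr (n - 2 * \<Gamma> * n) = (\<delta> / V) powr (1 - 2 * \<Gamma>)"
  proof -
    have "1 / n * (n - 2 * \<Gamma> * n) = 1 - 2 * \<Gamma>" using n by (simp add: field_simps)
    then show ?thesis by (simp add: radius_def powr_powr V_def n_def)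
  qed
  moreover have "V * (\<delta> / V) powr (1 - 2 * \<Gamma>) = V powr (2 * \<Gamma>) * \<delta> powr (1 - 2 * \<Gamma>)"
    using V \<delta> by (simp add: powr_divide powr_diff field_simps)
  moreover have "2 * \<Gamma> * n - n = n * (2 * \<Gamma> - 1)" by (simp add: algebra_simps)
  moreover have "real DIM('a) < 2 * \<Gamma> * real DIM('a)" using \<Gamma> n by (simp add: n_def)
  moreover have "0 < radius DIM('a) \<delta>" using \<delta> V by (simp add: radius_def V_def)
  ultimately show ?thesis
    using n \<Gamma> \<open>V \<noteq> 0\<close> by (simp add: nn_integral_powr_outside_ball V_def n_def)
qed

lemma prod_powr_outside_ind:
  fixes y :: "'a::real_normed_vector"
  assumes "finite A" "A \<noteq> {}" "0 \<le> R"
  shows "(\<Prod>j\<in>A. ennreal (norm y powr (- 2 * \<gamma> j * c) * outside_ind R y))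
    = ennreal (norm y powr (- (2 * (\<Sum>j\<in>A. \<gamma> j) * c)) * outside_ind R y)"
proof (cases "norm y > R")
  case True
  then have "norm y \<noteq> 0" using assms by linarith
  then have "(\<Prod>j\<in>A. norm y powr (- 2 * \<gamma> j * c)) = norm y powr (- (2 * (\<Sum>j\<in>A. \<gamma> j) * c))"
    by (simp add: powr_sum[symmetric] sum_distrib_left sum_distrib_right sum_negf)
  with True show ?thesis by (simp add: outside_ind_def prod_ennreal)
next
  case False
  with assms show ?thesis by (simp add: outside_ind_def prod_zero_iff card_gt_0_iff)
qed

lemma norm_sum_single_unit_coeff:
  fixes x :: "nat \<Rightarrow> 'a::real_normed_vector"
  assumes "finite I" "{i\<in>I. d i \<noteq> 0} = {i\<^sub>0}" "\<bar>d i\<^sub>0\<bar> = 1"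
  shows "norm (\<Sum>i\<in>I. of_int (d i) *\<^sub>R x i) = norm (x i\<^sub>0)"
proof -
  have "(\<Sum>i\<in>I. of_int (d i) *\<^sub>R x i) = (\<Sum>i\<in>{i\<in>I. d i \<noteq> 0}. of_int (d i) *\<^sub>R x i)"
    using assms(1) by (intro sum.mono_neutral_right) auto
  moreover have "\<bar>real_of_int (d i\<^sub>0)\<bar> = 1" using assms(3) by (metis of_int_1 of_int_abs)
  ultimately show ?thesis using assms(2) by simp
qed

lemma sum_row_supports:
  fixes \<kappa> m :: nat and D :: "nat \<Rightarrow> nat \<Rightarrow> int" and \<gamma> :: "nat \<Rightarrow> real"
  assumes "\<And>j. j \<in> {1..\<kappa>} \<Longrightarrow> \<exists>!i. i \<in> {1..m} \<and> D i j \<noteq> 0"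
  shows "(\<Sum>i\<in>{1..m}. \<Sum>j\<in>{j\<in>{1..\<kappa>}. D i j \<noteq> 0}. \<gamma> j) = (\<Sum>j\<in>{1..\<kappa>}. \<gamma> j)"
proof -
  have single: "(\<Sum>i\<in>{i\<in>{1..m}. D i j \<noteq> 0}. \<gamma> j) = \<gamma> j" if j: "j \<in> {1..\<kappa>}" for j
  proof -
    obtain i where "{i\<in>{1..m}. D i j \<noteq> 0} = {i}" using assms[OF j] by blast
    then show ?thesis by simp
  qed
  have "(\<Sum>i\<in>{1..m}. \<Sum>j\<in>{j\<in>{1..\<kappa>}. D i j \<noteq> 0}. \<gamma> j)
      = (\<Sum>j\<in>{1..\<kappa>}. \<Sum>i\<in>{i\<in>{1..m}. D i j \<noteq> 0}. \<gamma> j)"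
    by (intro sum.swap_restrict finite_atLeastAtMost)
  also have "\<dots> = (\<Sum>j\<in>{1..\<kappa>}. \<gamma> j)"
    using single by (intro sum.cong refl)
  finally show ?thesis .
qed

lemma prod_columns_eq_prod_rows:
  fixes x :: "nat \<Rightarrow> 'a::real_normed_vector" and D :: "nat \<Rightarrow> nat \<Rightarrow> int"
  assumes R: "0 \<le> R"
    and unit: "\<And>i j. i \<in> {1..m} \<Longrightarrow> j \<in> {1..\<kappa>} \<Longrightarrow> D i j \<in> {0, 1, -1}"
    and single: "\<And>j. j \<in> {1..\<kappa>} \<Longrightarrow> \<exists>!i. i \<in> {1..m} \<and> D i j \<noteq> 0"
    and nonempty: "\<And>i. i \<in> {1..m} \<Longrightarrow> {j\<in>{1..\<kappa>}. D i j \<noteq> 0} \<noteq> {}"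
  shows "(\<Prod>j\<in>{1..\<kappa>}. ennreal (norm (\<Sum>i\<in>{1..m}. of_int (D i j) *\<^sub>R x i) powr (- 2 * \<gamma> j * c)
            * outside_ind R (\<Sum>i\<in>{1..m}. of_int (D i j) *\<^sub>R x i)))
    = (\<Prod>i\<in>{1..m}. ennreal (norm (x i) powr (- (2 * (\<Sum>j\<in>{j\<in>{1..\<kappa>}. D i j \<noteq> 0}. \<gamma> j) * c))
            * outside_ind R (x i)))"
proof -
  define F where "F j y = ennreal (norm y powr (- 2 * \<gamma> j * c) * outside_ind R y)" for j and y :: 'a
  have column: "F j (\<Sum>i\<in>{1..m}. of_int (D i j) *\<^sub>R x i) = (\<Prod>i\<in>{i\<in>{1..m}. D i j \<noteq> 0}. F j (x i))"
    if j: "j \<in> {1..\<kappa>}" for j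
  proof -
    obtain i\<^sub>0 where i\<^sub>0: "{i\<in>{1..m}. D i j \<noteq> 0} = {i\<^sub>0}" using single[OF j] by blast
    then have "i\<^sub>0 \<in> {1..m}" "D i\<^sub>0 j \<noteq> 0" by auto
    then have "\<bar>D i\<^sub>0 j\<bar> = 1" using unit[OF _ j] by fastforce
    then have "norm (\<Sum>i\<in>{1..m}. of_int (D i j) *\<^sub>R x i) = norm (x i\<^sub>0)"
      using i\<^sub>0 by (intro norm_sum_single_unit_coeff) auto
    then show ?thesis unfolding i\<^sub>0 F_def outside_ind_def by simp
  qed
  have "(\<Prod>j\<in>{1..\<kappa>}. F j (\<Sum>i\<in>{1..m}. of_int (D i j) *\<^sub>R x i))
      = (\<Prod>j\<in>{1..\<kappa>}. \<Prod>i\<in>{i\<in>{1..m}. D i j \<noteq> 0}. F j (x i))"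
    using column by (intro prod.cong) auto
  also have "\<dots> = (\<Prod>i\<in>{1..m}. \<Prod>j\<in>{j\<in>{1..\<kappa>}. D i j \<noteq> 0}. F j (x i))"
    by (intro prod.swap_restrict[symmetric] finite_atLeastAtMost)
  also have "\<dots> = (\<Prod>i\<in>{1..m}. ennreal (norm (x i) powr (- (2 * (\<Sum>j\<in>{j\<in>{1..\<kappa>}. D i j \<noteq> 0}. \<gamma> j) * c))
            * outside_ind R (x i)))"
    unfolding F_def using R nonempty by (intro prod.cong refl prod_powr_outside_ind) auto
  finally show ?thesis unfolding F_def .
qed

lemma powr_prod_rows:
  fixes V \<delta> :: real
  assumes "0 < V" "0 < \<delta>" "finite I" "(\<Sum>i\<in>I. G i) = S"
  shows "V powr (- 2 * S) * (\<Prod>i\<in>I. V powr (2 * G i) * \<delta> powr (1 - 2 * G i) / (2 * G i - 1))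
    = \<delta> powr (real (card I) - 2 * S) * (\<Prod>i\<in>I. 1 / (2 * G i - 1))"
proof -
  have "(\<Prod>i\<in>I. V powr (2 * G i)) = V powr (2 * S)"
    using assms by (simp add: powr_sum[symmetric] sum_distrib_left[symmetric])
  moreover have "(\<Prod>i\<in>I. \<delta> powr (1 - 2 * G i)) = \<delta> powr (real (card I) - 2 * S)"
    using assms by (simp add: powr_sum[symmetric] sum_subtractf sum_distrib_left[symmetric])
  moreover have "V powr (- 2 * S) * V powr (2 * S) = 1"
    using assms by (simp add: powr_add[symmetric])
  ultimately show ?thesis
    by (simp add: prod.distrib prod_dividef divide_inverse mult.assoc[symmetric])
qed

lemma I_int_unit_columns:
  fixes \<kappa> m :: nat and D :: "nat \<Rightarrow> nat \<Rightarrow> int" and \<gamma> :: "nat \<Rightarrow> real" and \<delta> :: real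
  assumes \<delta>: "0 < \<delta>"
    and unit: "\<And>i j. i \<in> {1..m} \<Longrightarrow> j \<in> {1..\<kappa>} \<Longrightarrow> D i j \<in> {0, 1, -1}"
    and single: "\<And>j. j \<in> {1..\<kappa>} \<Longrightarrow> \<exists>!i. i \<in> {1..m} \<and> D i j \<noteq> 0"
    and \<Gamma>: "\<And>i. i \<in> {1..m} \<Longrightarrow> 1/2 < (\<Sum>j\<in>{j\<in>{1..\<kappa>}. D i j \<noteq> 0}. \<gamma> j)"
  shows "I_int TYPE('n::finite) \<kappa> m 1 D \<gamma> \<delta> =
     ennreal (\<delta> powr (real m - 2 * (\<Sum>j\<in>{1..\<kappa>}. \<gamma> j)) *
       (\<Prod>i\<in>{1..m}. 1 / (2 * (\<Sum>j\<in>{j\<in>{1..\<kappa>}. D i j \<noteq> 0}. \<gamma> j) - 1)))"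
proof -
  define G where "G i = (\<Sum>j\<in>{j\<in>{1..\<kappa>}. D i j \<noteq> 0}. \<gamma> j)" for i
  define V where "V = ball_vol CARD('n)"
  define R where "R = radius CARD('n) \<delta>"
  define c where "c i = V powr (2 * G i) * \<delta> powr (1 - 2 * G i) / (2 * G i - 1)" for i
  have "0 < V" by (simp add: V_def ball_vol_pos)
  then have "0 \<le> R" by (simp add: R_def radius_def V_def[symmetric])
  have nonempty: "{j\<in>{1..\<kappa>}. D i j \<noteq> 0} \<noteq> {}" if "i \<in> {1..m}" for i
  proof
    assume "{j\<in>{1..\<kappa>}. D i j \<noteq> 0} = {}"
    then have "1/2 < (0::real)" using \<Gamma>[OF that] by (simp only: sum.empty)
    then show False by simp
  qed
  have row_integral: "(\<integral>\<^sup>+ y. ennreal (norm (y::real^'n) powr (- (2 * G i * real CARD('n))) * outside_ind R y) \<partial>lborel)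
      = ennreal (c i)" if "i \<in> {1..m}" for i
    using nn_integral_powr_outside_radius[OF \<delta> \<Gamma>[OF that], where 'a="real^'n"]
    by (simp add: G_def V_def R_def c_def)
  interpret product_sigma_finite "\<lambda>_::nat. lborel :: (real^'n) measure" by standard
  have "I_int TYPE('n) \<kappa> m 1 D \<gamma> \<delta> = ennreal (V powr (- 2 * (\<Sum>j\<in>{1..\<kappa>}. \<gamma> j))) *
      (\<integral>\<^sup>+ x. (\<Prod>i\<in>{1..m}. ennreal (norm (x i) powr (- (2 * G i * real CARD('n))) * outside_ind R (x i)))
        \<partial>(PiM {1..m} (\<lambda>_. lborel :: (real^'n) measure)))"
    unfolding I_int_def of_int_1 div_by_1 G_def V_def R_def
    by (simp only: prod_columns_eq_prod_rows[OF \<open>0 \<le> R\<close>[unfolded R_def] unit single nonempty])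
  also have "\<dots> = ennreal (V powr (- 2 * (\<Sum>j\<in>{1..\<kappa>}. \<gamma> j))) * (\<Prod>i\<in>{1..m}. ennreal (c i))"
  proof -
    have "(\<lambda>y. ennreal (norm (y::real^'n) powr (- (2 * G i * real CARD('n))) * outside_ind R y)) \<in> borel_measurable lborel"
      for i unfolding outside_ind_def by measurable
    then show ?thesis by (subst product_nn_integral_prod) (auto simp: row_integral)
  qed
  also have "\<dots> = ennreal (V powr (- 2 * (\<Sum>j\<in>{1..\<kappa>}. \<gamma> j)) * (\<Prod>i\<in>{1..m}. c i))"
  proof -
    have "0 \<le> c i" if "i \<in> {1..m}" for i
      using \<Gamma>[OF that] by (simp add: c_def G_def)
    then have "(\<Prod>i\<in>{1..m}. ennreal (c i)) = ennreal (\<Prod>i\<in>{1..m}. c i)"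
      by (intro prod_ennreal)
    then show ?thesis by (simp add: ennreal_mult')
  qed
  also have "V powr (- 2 * (\<Sum>j\<in>{1..\<kappa>}. \<gamma> j)) * (\<Prod>i\<in>{1..m}. c i)
      = \<delta> powr (real m - 2 * (\<Sum>j\<in>{1..\<kappa>}. \<gamma> j)) * (\<Prod>i\<in>{1..m}. 1 / (2 * G i - 1))"
    unfolding c_def using \<open>0 < V\<close> \<delta> sum_row_supports[OF single, where \<gamma>=\<gamma>]
    by (subst powr_prod_rows) (simp_all add: G_def)
  finally show ?thesis unfolding G_def .
qed

lemma admissible_pivot_column:
  assumes "admissible \<kappa> m \<nu> \<mu> q D" "i \<in> {1..m}"
  shows "\<nu> i \<in> {j\<in>{1..\<kappa>}. D i j \<noteq> 0}" "D i (\<nu> i) = q"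
  using assms unfolding admissible_def is_division_def by (auto simp: image_subset_iff)

lemma admissible_unit_entries_denominator:
  assumes adm: "admissible \<kappa> m \<nu> \<mu> q D"
    and unit: "\<And>i j. i \<in> {1..m} \<Longrightarrow> j \<in> {1..\<kappa>} \<Longrightarrow> D i j \<in> {0, 1, -1}"
  shows "q = 1"
proof -
  have "1 \<in> {1..m}" "0 < q" using adm unfolding admissible_def is_division_def by auto
  with admissible_pivot_column[OF adm] unit show ?thesis by fastforce
qed

theorem proposition6p1:
  fixes \<kappa> m :: nat and \<nu> \<mu> :: "nat \<Rightarrow> nat" and q :: int
    and D :: "nat \<Rightarrow> nat \<Rightarrow> int" and \<gamma> :: "nat \<Rightarrow> real" and \<delta> :: real
  assumes "2 \<le> \<kappa>" and "0 < \<delta>"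
    and "1/2 < \<gamma> 1" and "\<And>i j. 1 \<le> i \<Longrightarrow> i \<le> j \<Longrightarrow> j \<le> \<kappa> \<Longrightarrow> \<gamma> i \<le> \<gamma> j"
    and "admissible \<kappa> m \<nu> \<mu> q D"
    and "\<And>i j. i \<in> {1..m} \<Longrightarrow> j \<in> {1..\<kappa>} \<Longrightarrow> D i j \<in> {0, 1, -1}"
    and "\<And>j. j \<in> {1..\<kappa>} \<Longrightarrow> \<exists>!i. i \<in> {1..m} \<and> D i j \<noteq> 0"
  shows "I_int TYPE('n::finite) \<kappa> m q D \<gamma> \<delta> =
     ennreal (\<delta> powr (real m - 2 * (\<Sum>j\<in>{1..\<kappa>}. \<gamma> j)) *
       (\<Prod>i\<in>{1..m}. 1 / (2 * (\<Sum>j\<in>{j\<in>{1..\<kappa>}. D i j \<noteq> 0}. \<gamma> j) - 1)))"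
proof -
  have \<gamma>: "1/2 < \<gamma> j" if "j \<in> {1..\<kappa>}" for j
    using assms(3) assms(4)[of 1 j] that by force
  then have \<gamma>_nonneg: "0 \<le> \<gamma> j" if "j \<in> {1..\<kappa>}" for j
    using that by force
  have "1/2 < (\<Sum>j\<in>{j\<in>{1..\<kappa>}. D i j \<noteq> 0}. \<gamma> j)" if i: "i \<in> {1..m}" for i
  proof -
    have pivot: "\<nu> i \<in> {j\<in>{1..\<kappa>}. D i j \<noteq> 0}"
      using admissible_pivot_column[OF assms(5) i] by blast
    then have "\<gamma> (\<nu> i) \<le> (\<Sum>j\<in>{j\<in>{1..\<kappa>}. D i j \<noteq> 0}. \<gamma> j)"
      using \<gamma>_nonneg by (intro member_le_sum) auto
    with pivot \<gamma> show ?thesis by force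
  qed
  moreover have "q = 1" using assms(5,6) by (rule admissible_unit_entries_denominator)
  ultimately show ?thesis using I_int_unit_columns assms(2,6,7) by blast
qed

end
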